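(* If a collective choice problem $\mathcal C$ is a Distribution Problem, then it is $\mathcal D$-Manipulable for every veto-proof voting rule $\mathcal D$.
   Context: Collective choice problem $\mathcal C=(X,\{\succsim_i\}_{i\in N\cup\{A\}})$: voters $N=\{1,\dots,n\}$ and an agenda setter $A$, a compact metrizable policy space $X$, and continuous preferences $\succsim_i$ represented by continuous utilities $u_i$. $X_A^*=\arg\max_X u_A$. $\mathcal C$ is a Distribution Problem if for every $x\in X$ and every player $i\in N\cup\{A\}$: (Scarcity) if $u_i(x)<\max_{z\in X}u_i(z)$ then either some player $j\ne i$ has $u_j(x)>\min_{z\in X}u_j(z)$ or some policy $y$ has $u_k(y)>u_k(x)$ for all players $k$; (Transferability) if $u_i(x)>\min_{z\in X}u_i(z)$ then some policy $y$ has $u_j(y)>u_j(x)$ for all players $j\ne i$. A voting rule is a collection $\mathcal D\subseteq 2^N$ of winning coalitions; it is veto-proof if for every voter $i$ some $D\in\mathcal D$ satisfies $D\subseteq N\setminus\{i\}$. $\mathcal C$ is $\mathcal D$-Manipulable if for every $x\notin X_A^*$ there exist a policy $y$ and $D\in\mathcal D$ with $y\succ_A x$ and $y\succ_i x$ for every $i\in D$. *)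

theory Defs
  imports "HOL-Analysis.Analysis"
begin

text \<open>Players are of type 'v option: Some i is voter i (i in N), None is the
agenda setter A. A utility profile u assigns each player a utility on policies.\<close>

definition players :: "'v set \<Rightarrow> 'v option set" where
  "players N = insert None (Some ` N)"

definition collective_choice_problem ::
  "'v set \<Rightarrow> ('x::metric_space) set \<Rightarrow> ('v option \<Rightarrow> 'x \<Rightarrow> real) \<Rightarrow> bool" where
  "collective_choice_problem N X u \<longleftrightarrow>
     finite N \<and> N \<noteq> {} \<and> compact X \<and> (\<forall>i\<in>players N. continuous_on X (u i))"

definition setter_optima :: "'x set \<Rightarrow> ('v option \<Rightarrow> 'x \<Rightarrow> real) \<Rightarrow> 'x set" where
  "setter_optima X u = {x \<in> X. \<forall>z\<in>X. u None z \<le> u None x}"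

definition distribution_problem ::
  "'v set \<Rightarrow> 'x set \<Rightarrow> ('v option \<Rightarrow> 'x \<Rightarrow> real) \<Rightarrow> bool" where
  "distribution_problem N X u \<longleftrightarrow>
     (\<forall>x\<in>X. \<forall>i\<in>players N.
        (u i x < (SUP z\<in>X. u i z) \<longrightarrow>
           (\<exists>j\<in>players N. j \<noteq> i \<and> u j x > (INF z\<in>X. u j z)) \<or>
           (\<exists>y\<in>X. \<forall>k\<in>players N. u k y > u k x)) \<and>
        (u i x > (INF z\<in>X. u i z) \<longrightarrow>
           (\<exists>y\<in>X. \<forall>j\<in>players N. j \<noteq> i \<longrightarrow> u j y > u j x)))"

definition veto_proof :: "'v set \<Rightarrow> 'v set set \<Rightarrow> bool" where
  "veto_proof N \<D> \<longleftrightarrow> (\<forall>i\<in>N. \<exists>D\<in>\<D>. D \<subseteq> N - {i})"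

definition manipulable ::
  "'v set \<Rightarrow> 'x set \<Rightarrow> ('v option \<Rightarrow> 'x \<Rightarrow> real) \<Rightarrow> 'v set set \<Rightarrow> bool" where
  "manipulable N X u \<D> \<longleftrightarrow>
     (\<forall>x\<in>X. x \<notin> setter_optima X u \<longrightarrow>
        (\<exists>y\<in>X. \<exists>D\<in>\<D>. u None y > u None x \<and> (\<forall>i\<in>D. u (Some i) y > u (Some i) x)))"

end

theory Submission
  imports Defs
begin

text \<open>If the agenda setter is not at an optimum, scarcity leaves two cases. Either some
voter v is above his minimum, and transferability moves utility from v to everybody
else; or there is a strict Pareto improvement. In both cases the setter finds a policy
he prefers that every voter except possibly one voter v prefers as well, and
veto-proofness supplies a winning coalition avoiding v.\<close>

lemma less_SUP_if_not_maximal: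
  fixes f :: "'x \<Rightarrow> real"
  assumes "bdd_above (f ` X)" and "z \<in> X" and "f x < f z"
  shows "f x < (SUP z\<in>X. f z)"
  using assms cSUP_upper less_le_trans by metis

lemma setter_below_SUP_if_not_optimal:
  assumes "collective_choice_problem N X u" and "x \<in> X" and "x \<notin> setter_optima X u"
  shows "u None x < (SUP z\<in>X. u None z)"
proof -
  have "compact X" and "continuous_on X (u None)"
    using assms(1) unfolding collective_choice_problem_def players_def by auto
  then have "bdd_above (u None ` X)"
    by (meson bounded_imp_bdd_above compact_continuous_image compact_imp_bounded)
  moreover obtain z where "z \<in> X" and "u None x < u None z"
    using assms(2,3) unfolding setter_optima_def by force
  ultimately show ?thesis
    by (rule less_SUP_if_not_maximal)
qed

lemma distribution_problem_improves_all_but_one: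
  assumes "distribution_problem N X u" and "N \<noteq> {}"
    and "x \<in> X" and "u None x < (SUP z\<in>X. u None z)"
  shows "\<exists>y\<in>X. \<exists>v\<in>N. u None x < u None y \<and> (\<forall>i\<in>N - {v}. u (Some i) x < u (Some i) y)"
proof -
  have setter: "None \<in> players N" and voter: "\<And>v. v \<in> N \<Longrightarrow> Some v \<in> players N"
    unfolding players_def by simp_all
  from assms(1,3,4) setter consider
      (transfer) v where "v \<in> N" and "(INF z\<in>X. u (Some v) z) < u (Some v) x"
    | (pareto) y where "y \<in> X" and "\<forall>k\<in>players N. u k x < u k y"
    unfolding distribution_problem_def players_def by blast
  then show ?thesis
  proof cases
    case transfer
    with assms(1,3) voter obtain y where "y \<in> X"
      and "\<forall>j\<in>players N. j \<noteq> Some v \<longrightarrow> u j x < u j y"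
      unfolding distribution_problem_def by blast
    with \<open>v \<in> N\<close> setter voter show ?thesis by blast
  next
    case pareto
    moreover obtain v where "v \<in> N" using assms(2) by blast
    ultimately show ?thesis using setter voter by blast
  qed
qed

lemma manipulable_if_improves_all_but_one:
  assumes "veto_proof N \<D>"
    and "\<And>x. \<lbrakk>x \<in> X; x \<notin> setter_optima X u\<rbrakk> \<Longrightarrow>
      \<exists>y\<in>X. \<exists>v\<in>N. u None x < u None y \<and> (\<forall>i\<in>N - {v}. u (Some i) x < u (Some i) y)"
  shows "manipulable N X u \<D>"
  unfolding manipulable_def
proof (intro ballI impI)
  fix x assume "x \<in> X" and "x \<notin> setter_optima X u"
  with assms(2) obtain y v where "y \<in> X" and "v \<in> N" and "u None x < u None y"
    and improves: "\<forall>i\<in>N - {v}. u (Some i) x < u (Some i) y"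
    by blast
  moreover obtain D where "D \<in> \<D>" and "D \<subseteq> N - {v}"
    using assms(1) \<open>v \<in> N\<close> unfolding veto_proof_def by blast
  ultimately show "\<exists>y\<in>X. \<exists>D\<in>\<D>. u None y > u None x \<and> (\<forall>i\<in>D. u (Some i) y > u (Some i) x)"
    by blast
qed

theorem theorem5:
  fixes N :: "'v set" and X :: "('x::metric_space) set"
    and u :: "'v option \<Rightarrow> 'x \<Rightarrow> real"
  assumes "collective_choice_problem N X u"
    and "distribution_problem N X u"
  shows "\<forall>\<D>. \<D> \<subseteq> Pow N \<and> veto_proof N \<D> \<longrightarrow> manipulable N X u \<D>"
proof (intro allI impI)
  fix \<D> assume "\<D> \<subseteq> Pow N \<and> veto_proof N \<D>"
  then have "veto_proof N \<D>" ..
  have "N \<noteq> {}"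
    using assms(1) unfolding collective_choice_problem_def by blast
  show "manipulable N X u \<D>"
  proof (rule manipulable_if_improves_all_but_one[OF \<open>veto_proof N \<D>\<close>])
    fix x assume "x \<in> X" and "x \<notin> setter_optima X u"
    then have "u None x < (SUP z\<in>X. u None z)"
      by (rule setter_below_SUP_if_not_optimal[OF assms(1)])
    with assms(2) \<open>N \<noteq> {}\<close> \<open>x \<in> X\<close>
    show "\<exists>y\<in>X. \<exists>v\<in>N. u None x < u None y \<and> (\<forall>i\<in>N - {v}. u (Some i) x < u (Some i) y)"
      by (rule distribution_problem_improves_all_but_one)
  qed
qed

end
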